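(* Let $N$ be a positive integer, $a,b,c\in\mathbb{R}$ with $a\neq0$, $W=[w_{ij}]\in\mathbb{R}^{N\times N}$ with $w_{ii}=0$ for all $i$, $\Delta=\mathrm{diag}(\delta_1,\dots,\delta_N)$ with $\delta_i\in\{0,1\}$, and $h>0$. Put $\Phi_s=e^{ah}I_N+\frac{c}{a}(e^{ah}-1)W$ and $\Psi_s=\frac{b}{a}(e^{ah}-1)\Delta$. If the pair $(W,\Delta)$ is controllable, $b\neq0$ and $c\neq0$, then the discrete-time system $X(k+1)=\Phi_sX(k)+\Psi_sU(k)$ is controllable.
   Context: This is the networked sampled-data system with one-dimensional node dynamics (node state matrix $a$, input matrix $b$, and inner coupling $HC=c$). The discrete-time system $X(k+1)=\Phi_sX(k)+\Psi_sU(k)$, $X(k)\in\mathbb{R}^N$, $U(k)\in\mathbb{R}^N$, is called controllable if every initial state can be steered to the origin in finitely many steps. For $F\in\mathbb{C}^{q\times q}$, $G\in\mathbb{C}^{q\times s}$, the pair $(F,G)$ is called controllable if $\mathrm{rank}[sI_q-F,\ G]=q$ for every $s\in\mathbb{C}$. *)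

theory Defs
  imports "HOL-Analysis.Analysis"
begin

definition hblock :: "'a::field^'q^'r \<Rightarrow> 'a^'s^'r \<Rightarrow> 'a^('q + 's)^'r" where
  "hblock F G = (\<chi> i j. case j of Inl k \<Rightarrow> F $ i $ k | Inr k \<Rightarrow> G $ i $ k)"

definition pair_controllable :: "complex^'q^'q \<Rightarrow> complex^'s^'q \<Rightarrow> bool" where
  "pair_controllable F G \<longleftrightarrow> (\<forall>s::complex. rank (hblock (mat s - F) G) = CARD('q))"


definition diagm :: "('n \<Rightarrow> 'a::zero) \<Rightarrow> 'a^'n^'n" where
  "diagm d = (\<chi> i j. if i = j then d i else 0)"

definition cmat :: "real^'m^'n \<Rightarrow> complex^'m^'n" where
  "cmat A = (\<chi> i j. complex_of_real (A $ i $ j))"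

definition dt_controllable :: "real^'n^'n \<Rightarrow> real^'m^'n \<Rightarrow> bool" where
  "dt_controllable Phi Psi \<longleftrightarrow>
     (\<forall>x0. \<exists>K::nat. \<exists>X::nat \<Rightarrow> real^'n. \<exists>U::nat \<Rightarrow> real^'m.
        X 0 = x0 \<and> (\<forall>k. X (Suc k) = Phi *v X k + Psi *v U k) \<and> X K = 0)"

end

theory Submission
  imports Defs "HOL-Computational_Algebra.Fundamental_Theorem_Algebra"
begin

(* Since Phi_s = e^(ah) I + kappa W and Psi_s = beta Delta with kappa, beta nonzero, a left
   eigenvector of Phi_s annihilated by Psi_s is a left eigenvector of W annihilated by Delta, so
   the Popov-Belevitch-Hautus condition passes from (W, Delta) to (Phi_s, Psi_s).
   PBH implies that the vectors Phi_s^j Psi_s u span R^N: otherwise a real vector orthogonal to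
   all of them, complexified, lies in a nonzero Phi_s-invariant subspace of left annihilators of
   Psi_s, and such a subspace contains a left eigenvector. Finitely many powers j < M then span,
   and x0 is steered to 0 in M steps by choosing inputs that produce -Phi_s^M x0. *)

lemma mem_span_image_lessThan_sum:
  fixes g :: "nat \<Rightarrow> 'a::field^'n"
  assumes "x \<in> vec.span (g ` {..<k})"
  shows "\<exists>c. x = (\<Sum>i<k. c i *s g i)"
  using assms
proof (induction k arbitrary: x)
  case 0
  then show ?case by simp
next
  case (Suc k)
  then obtain a where "x - a *s g k \<in> vec.span (g ` {..<k})"
    by (auto simp: lessThan_Suc vec.span_breakdown_eq)
  then obtain c where "x - a *s g k = (\<Sum>i<k. c i *s g i)"
    using Suc.IH by blast
  moreover have "(\<Sum>i<k. (c(k := a)) i *s g i) = (\<Sum>i<k. c i *s g i)"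
    by (intro sum.cong) auto
  ultimately have "x = (\<Sum>i<Suc k. (c(k := a)) i *s g i)"
    by (simp add: algebra_simps)
  then show ?case by blast
qed

lemma ex_in_span_of_preceding:
  fixes g :: "nat \<Rightarrow> 'a::field^'n"
  shows "\<exists>k. g k \<in> vec.span (g ` {..<k})"
proof (rule ccontr)
  assume "\<nexists>k. g k \<in> vec.span (g ` {..<k})"
  then have "vec.dim (g ` {..<k}) = k" for k
    by (induction k) (simp_all add: lessThan_Suc vec.dim_insert)
  then show False
    using dim_subset_UNIV_cart_gen[of "g ` {..<Suc CARD('n)}"] by simp
qed

lemma rank_less_card_if_left_null:
  fixes M :: "'a::field^'c^'r"
  assumes "v v* M = 0" and "v \<noteq> 0"
  shows "rank M < CARD('r)"
proof -
  obtain k where k: "v $ k \<noteq> 0"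
    using assms(2) by (auto simp: vec_eq_iff)
  let ?R = "(\<lambda>i. row i M) ` (UNIV - {k})"
  have "(\<Sum>i\<in>UNIV. v $ i *s row i M) = 0"
    using assms(1) by (simp add: vec_eq_iff vector_matrix_mult_def row_def sum_component mult.commute)
  then have "v $ k *s row k M = - (\<Sum>i\<in>UNIV - {k}. v $ i *s row i M)"
    by (simp add: sum.remove[of UNIV k] eq_neg_iff_add_eq_0)
  then have "row k M = (- inverse (v $ k)) *s (\<Sum>i\<in>UNIV - {k}. v $ i *s row i M)"
    using k by (simp add: vec_eq_iff field_simps)
  also have "\<dots> \<in> vec.span ?R"
    by (intro vec.span_scale vec.span_sum vec.span_base) auto
  finally have "rows M \<subseteq> vec.span ?R"
    by (auto simp: rows_def intro: vec.span_base)
  then have "rank M \<le> card ?R"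
    unfolding row_rank_def_gen by (intro vec.dim_le_card) auto
  also have "\<dots> \<le> card (UNIV - {k})"
    by (rule card_image_le) simp
  also have "\<dots> < CARD('r)"
    by (simp add: card_Diff1_less)
  finally show ?thesis .
qed

lemma vector_matrix_hblock:
  "v v* hblock A B = (\<chi> j. case j of Inl k \<Rightarrow> (v v* A) $ k | Inr k \<Rightarrow> (v v* B) $ k)"
  by (simp add: vec_eq_iff vector_matrix_mult_def hblock_def split: sum.split)

lemma vector_matrix_mat: "(v::'a::comm_ring_1^'n) v* mat s = s *s v"
  by (simp add: vec_eq_iff vector_matrix_mult_def mat_def mult.commute if_distrib cong: if_cong)

section \<open>Eigenvectors in invariant subspaces\<close>

definition apply_poly :: "('a::field^'n \<Rightarrow> 'a^'n) \<Rightarrow> 'a poly \<Rightarrow> 'a^'n \<Rightarrow> 'a^'n" where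
  "apply_poly f p x = (\<Sum>i\<le>degree p. coeff p i *s (f ^^ i) x)"

lemma apply_poly_eq_sum_atMost:
  assumes "degree p \<le> n"
  shows "apply_poly f p x = (\<Sum>i\<le>n. coeff p i *s (f ^^ i) x)"
  unfolding apply_poly_def using assms
  by (intro sum.mono_neutral_left) (auto simp: coeff_eq_0)

lemma apply_poly_const [simp]: "apply_poly f [:c:] x = c *s x"
  by (simp add: apply_poly_def)

lemma apply_poly_linear_factor:
  assumes "Vector_Spaces.linear (*s) (*s) f"
  shows "apply_poly f ([:-r, 1:] * h) x = f (apply_poly f h x) - r *s apply_poly f h x"
proof -
  let ?d = "degree h"
  have "degree ([:-r, 1:] * h) \<le> Suc ?d"
    using degree_mult_le[of "[:-r, 1:]" h] by simp
  moreover have "[:-r, 1:] * h = pCons 0 h - smult r h"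
    by (simp add: mult_pCons_left)
  ultimately have "apply_poly f ([:-r, 1:] * h) x
      = (\<Sum>i\<le>Suc ?d. coeff (pCons 0 h) i *s (f ^^ i) x)
        - (\<Sum>i\<le>Suc ?d. (r * coeff h i) *s (f ^^ i) x)"
    by (simp add: apply_poly_eq_sum_atMost vec.scale_left_diff_distrib sum_subtractf)
  also have "(\<Sum>i\<le>Suc ?d. coeff (pCons 0 h) i *s (f ^^ i) x)
      = (\<Sum>i\<le>?d. f (coeff h i *s (f ^^ i) x))"
    unfolding sum.atMost_Suc_shift by (simp add: vec.linear_scale[OF assms])
  also have "\<dots> = f (apply_poly f h x)"
    by (simp add: apply_poly_def vec.linear_sum[OF assms])
  also have "(\<Sum>i\<le>Suc ?d. (r * coeff h i) *s (f ^^ i) x) = r *s apply_poly f h x"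
    by (simp add: apply_poly_eq_sum_atMost[of h "Suc ?d"] vec.scale_sum_right)
  finally show ?thesis .
qed

lemma apply_poly_in_subspace:
  assumes "vec.subspace S" and "f ` S \<subseteq> S" and "x \<in> S"
  shows "apply_poly f p x \<in> S"
proof -
  have "(f ^^ i) x \<in> S" for i
    using assms(2,3) by (induction i) auto
  then show ?thesis
    unfolding apply_poly_def by (intro vec.subspace_sum vec.subspace_scale assms(1))
qed

lemma ex_annihilating_poly:
  "\<exists>p. p \<noteq> 0 \<and> apply_poly f p x = 0"
proof -
  let ?g = "\<lambda>i. (f ^^ i) x"
  obtain k where "?g k \<in> vec.span (?g ` {..<k})"
    using ex_in_span_of_preceding[of ?g] by blast
  then obtain c where c: "?g k = (\<Sum>i<k. c i *s ?g i)"
    using mem_span_image_lessThan_sum by blast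
  define q where "q = monom 1 k - (\<Sum>i<k. monom (c i) i)"
  have coeff_q: "coeff q i = (if i = k then 1 else 0) - (if i < k then c i else 0)" for i
    by (simp add: q_def coeff_sum coeff_monom)
  have "degree q \<le> k"
    by (rule degree_le) (auto simp: coeff_q)
  then have "apply_poly f q x = ?g k - (\<Sum>i<k. c i *s ?g i)"
    by (simp add: apply_poly_eq_sum_atMost lessThan_Suc_atMost[symmetric] coeff_q
        vec.scale_left_diff_distrib sum_subtractf sum_negf if_distrib cong: if_cong)
  moreover have "q \<noteq> 0"
    using coeff_q[of k] by auto
  ultimately show ?thesis
    using c by auto
qed

text \<open>A nonzero annihilating polynomial of least degree has a complex root r; dividing off
  the factor X - r leaves a polynomial that no longer annihilates, and its value is an
  eigenvector for r.\<close>

lemma invariant_subspace_has_eigenvector: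
  fixes f :: "complex^'n \<Rightarrow> complex^'n"
  assumes "Vector_Spaces.linear (*s) (*s) f" and "vec.subspace S" and "f ` S \<subseteq> S"
    and "x \<in> S" and "x \<noteq> 0"
  shows "\<exists>v s. v \<in> S \<and> v \<noteq> 0 \<and> f v = s *s v"
proof -
  let ?annihilates = "\<lambda>p. p \<noteq> 0 \<and> apply_poly f p x = 0"
  obtain p0 where "?annihilates p0"
    using ex_annihilating_poly by blast
  then obtain p where p: "p \<noteq> 0" "apply_poly f p x = 0"
    and least: "\<And>q. q \<noteq> 0 \<Longrightarrow> apply_poly f q x = 0 \<Longrightarrow> degree p \<le> degree q"
    using ex_has_least_nat[of ?annihilates p0 degree] by blast
  have "degree p \<noteq> 0"
  proof
    assume "degree p = 0"
    then obtain c where "p = [:c:]"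
      by (rule degree_eq_zeroE)
    then show False
      using p assms(5) by (auto simp: vec.scale_eq_0_iff)
  qed
  then obtain r where "poly p r = 0"
    using fundamental_theorem_of_algebra[of p] by (auto simp: constant_degree)
  then obtain h where h: "p = [:-r, 1:] * h"
    by (auto simp: poly_eq_0_iff_dvd elim: dvdE)
  have "h \<noteq> 0"
    using p(1) h by auto
  then have "degree p = Suc (degree h)"
    unfolding h by (subst degree_mult_eq) auto
  with \<open>h \<noteq> 0\<close> have "apply_poly f h x \<noteq> 0"
    using least by fastforce
  moreover have "f (apply_poly f h x) = r *s apply_poly f h x"
    using p(2) unfolding h apply_poly_linear_factor[OF assms(1)] by simp
  ultimately show ?thesis
    using apply_poly_in_subspace[OF assms(2-4)] by blast
qed

section \<open>Controllability of discrete-time systems\<close>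

primrec matpow :: "'a::semiring_1^'n^'n \<Rightarrow> nat \<Rightarrow> 'a^'n^'n" where
  "matpow A 0 = mat 1"
| "matpow A (Suc k) = A ** matpow A k"

definition cvec :: "real^'n \<Rightarrow> complex^'n" where
  "cvec x = (\<chi> i. complex_of_real (x $ i))"

lemma cvec_eq_0_iff [simp]: "cvec x = 0 \<longleftrightarrow> x = 0"
  by (simp add: cvec_def vec_eq_iff)

lemma cvec_vector_cmat: "cvec x v* cmat A = cvec (x v* A)"
  by (simp add: cvec_def cmat_def vector_matrix_mult_def vec_eq_iff)

lemma cmat_mult: "cmat (A ** B) = cmat A ** cmat B"
  by (simp add: cmat_def matrix_matrix_mult_def vec_eq_iff)

lemma cmat_add: "cmat (A + B) = cmat A + cmat B"
  by (simp add: cmat_def vec_eq_iff)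

lemma cmat_mat: "cmat (mat x) = mat (complex_of_real x)"
  by (simp add: cmat_def mat_def vec_eq_iff)

lemma vector_cmat_scaleR: "v v* cmat (x *\<^sub>R A) = complex_of_real x *s (v v* cmat A)"
  by (simp add: cmat_def vector_matrix_mult_def vec_eq_iff sum_distrib_left mult_ac)

lemma pair_controllable_left_eigenvector:
  assumes "pair_controllable F G" and "v v* F = s *s v" and "v v* G = 0"
  shows "v = 0"
proof (rule ccontr)
  assume "v \<noteq> 0"
  have "v v* (mat s - F) = 0"
    using assms(2) by (simp add: vector_matrix_mult_diff_rdistrib vector_matrix_mat)
  then have "v v* hblock (mat s - F) G = 0"
    using assms(3) by (simp add: vector_matrix_hblock vec_eq_iff split: sum.split)
  with \<open>v \<noteq> 0\<close> assms(1) show False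
    unfolding pair_controllable_def using rank_less_card_if_left_null by fastforce
qed

lemma span_controllability_vectors_if_PBH:
  fixes F :: "real^'n^'n" and G :: "real^'m^'n"
  assumes PBH: "\<And>s v. v v* cmat F = s *s v \<Longrightarrow> v v* cmat G = 0 \<Longrightarrow> v = 0"
  shows "span (range (\<lambda>(j, u). (matpow F j ** G) *v u)) = UNIV"
proof (rule ccontr)
  assume "span (range (\<lambda>(j, u). (matpow F j ** G) *v u)) \<noteq> UNIV"
  then obtain w where "w \<noteq> 0"
    and w: "\<And>x. x \<in> span (range (\<lambda>(j, u). (matpow F j ** G) *v u)) \<Longrightarrow> w \<bullet> x = 0"
    using span_not_UNIV_orthogonal by blast
  have annihilates: "w v* (matpow F j ** G) = 0" for j
  proof -
    let ?z = "w v* (matpow F j ** G)"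
    have "?z \<bullet> ?z = w \<bullet> ((matpow F j ** G) *v ?z)"
      by (rule dot_lmul_matrix)
    also have "\<dots> = 0"
      by (intro w span_base) auto
    finally show ?thesis
      by simp
  qed
  define S where "S = {v. \<forall>j. v v* cmat (matpow F j ** G) = 0}"
  have "vec.subspace S"
    by (auto simp: S_def vec.subspace_def vector_matrix_left_distrib scalar_vector_matrix_assoc)
  moreover have "(v v* cmat F) v* cmat (matpow F j ** G) = v v* cmat (matpow F (Suc j) ** G)" for v j
    by (simp add: vector_matrix_mul_assoc cmat_mult matrix_mul_assoc)
  then have "(\<lambda>v. v v* cmat F) ` S \<subseteq> S"
    by (auto simp: S_def simp del: matpow.simps(2))
  moreover have "(\<lambda>v. v v* cmat F) = (*v) (transpose (cmat F))"
    by (simp add: fun_eq_iff transpose_matrix_vector)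
  then have "Vector_Spaces.linear (*s) (*s) (\<lambda>v. v v* cmat F)"
    by (metis matrix_vector_mul_linear_gen)
  moreover have "cvec w \<in> S" and "cvec w \<noteq> 0"
    using annihilates \<open>w \<noteq> 0\<close> by (simp_all add: S_def cvec_vector_cmat)
  ultimately obtain v s where "v \<in> S" "v \<noteq> 0" "v v* cmat F = s *s v"
    using invariant_subspace_has_eigenvector by blast
  moreover from \<open>v \<in> S\<close> have "v v* cmat (matpow F 0 ** G) = 0"
    unfolding S_def by blast
  then have "v v* cmat G = 0"
    by (simp add: matrix_mul_lid)
  ultimately show False
    using PBH by blast
qed

lemma dt_controllable_if_steerable:
  fixes F :: "real^'n^'n" and G :: "real^'m^'n"
  assumes "\<And>y. \<exists>u. y = (\<Sum>i<M. (matpow F (M - Suc i) ** G) *v u i)"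
  shows "dt_controllable F G"
  unfolding dt_controllable_def
proof
  fix x0
  obtain u where u: "- (matpow F M *v x0) = (\<Sum>i<M. (matpow F (M - Suc i) ** G) *v u i)"
    using assms by blast
  define X where "X k = matpow F k *v x0 + (\<Sum>i<k. (matpow F (k - Suc i) ** G) *v u i)" for k
  have "X (Suc k) = F *v X k + G *v u k" for k
  proof -
    have "matpow F (Suc k - Suc i) = F ** matpow F (k - Suc i)" if "i < k" for i
    proof -
      have "Suc k - Suc i = Suc (k - Suc i)"
        using that by simp
      then show ?thesis
        by (simp only: matpow.simps)
    qed
    then have "(\<Sum>i<k. (matpow F (Suc k - Suc i) ** G) *v u i)
        = F *v (\<Sum>i<k. (matpow F (k - Suc i) ** G) *v u i)"
      by (simp add: vec.sum matrix_vector_mul_assoc matrix_mul_assoc)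
    then show ?thesis
      by (simp add: X_def matrix_vector_mul_assoc matrix_vector_right_distrib)
  qed
  moreover have "X M = 0"
    by (simp add: X_def flip: u)
  ultimately show "\<exists>K X U. X 0 = x0 \<and> (\<forall>k. X (Suc k) = F *v X k + G *v U k) \<and> X K = 0"
    by (intro exI[of _ M] exI[of _ X] exI[of _ u]) (simp add: X_def)
qed

lemma subspace_range_sum_matrix_vector:
  fixes A :: "'i \<Rightarrow> real^'m^'n"
  shows "subspace (range (\<lambda>u. \<Sum>i\<in>I. A i *v u i))"
proof -
  define f where "f u = (\<Sum>i\<in>I. A i *v u i)" for u
  have add: "f a + f b = f (\<lambda>i. a i + b i)" for a b
    by (simp add: f_def sum.distrib matrix_vector_right_distrib)
  have scale: "c *\<^sub>R f a = f (\<lambda>i. c *\<^sub>R a i)" for c a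
    by (simp add: f_def scaleR_sum_right matrix_vector_mult_scaleR)
  have "subspace (range f)"
    unfolding subspace_def
  proof (intro conjI ballI allI)
    show "0 \<in> range f"
      by (rule range_eqI[of _ f "\<lambda>_. 0"]) (simp add: f_def)
    show "x + y \<in> range f" if "x \<in> range f" "y \<in> range f" for x y
      using that by (auto simp: add)
    show "c *\<^sub>R x \<in> range f" if "x \<in> range f" for c x
      using that by (auto simp: scale)
  qed
  then show ?thesis
    by (simp add: f_def[abs_def])
qed

lemma dt_controllable_if_span:
  fixes F :: "real^'n^'n" and G :: "real^'m^'n"
  assumes "span (range (\<lambda>(j, u). (matpow F j ** G) *v u)) = UNIV"
  shows "dt_controllable F G"
proof -
  let ?v = "\<lambda>(j, u). (matpow F j ** G) *v u"
  obtain B where B: "B \<subseteq> range ?v" "independent B" "range ?v \<subseteq> span B"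
    by (rule basis_exists)
  then have "finite B"
    using independent_bound by blast
  have "span B = UNIV"
    using assms span_mono[OF B(3)] by (simp add: span_span top.extremum_unique)
  obtain C where "finite C" and C: "B = ?v ` C"
    using finite_subset_image[OF \<open>finite B\<close> B(1)] by blast
  define M where "M = Suc (Max (fst ` C))"
  define steer where "steer u = (\<Sum>i<M. (matpow F (M - Suc i) ** G) *v u i)" for u
  have "B \<subseteq> range steer"
  proof
    fix b assume "b \<in> B"
    then obtain j y where "(j, y) \<in> C" and b: "b = (matpow F j ** G) *v y"
      using C by auto
    then have "j \<in> fst ` C"
      by force
    then have "j < M"
      using \<open>finite C\<close> by (simp add: M_def less_Suc_eq_le Max_ge)
    have "steer (\<lambda>i. if i = M - Suc j then y else 0)
        = (\<Sum>i<M. if i = M - Suc j then (matpow F (M - Suc i) ** G) *v y else 0)"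
      unfolding steer_def by (intro sum.cong) auto
    also have "\<dots> = b"
      using \<open>j < M\<close> by (simp add: b)
    finally show "b \<in> range steer"
      by (metis rangeI)
  qed
  moreover have "subspace (range steer)"
    unfolding steer_def by (rule subspace_range_sum_matrix_vector)
  ultimately have "span B \<subseteq> range steer"
    by (rule span_minimal)
  then have "\<exists>u. y = steer u" for y
    using \<open>span B = UNIV\<close> by blast
  then show ?thesis
    unfolding steer_def by (rule dt_controllable_if_steerable)
qed

theorem corollary8:
  fixes a b c h :: real and W :: "real^'n^'n" and \<delta> :: "'n \<Rightarrow> real"
  assumes "a \<noteq> 0" and "h > 0"
    and "\<forall>i. W $ i $ i = 0"
    and "\<forall>i. \<delta> i \<in> {0, 1}"
    and "pair_controllable (cmat W) (cmat (diagm \<delta>))"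
    and "b \<noteq> 0" and "c \<noteq> 0"
  shows "dt_controllable
           (exp (a * h) *\<^sub>R mat 1 + ((c / a) * (exp (a * h) - 1)) *\<^sub>R W)
           (((b / a) * (exp (a * h) - 1)) *\<^sub>R diagm \<delta>)"
proof -
  \<comment> \<open>The zero diagonal of W and the 0/1 entries of \<delta> are not needed.\<close>
  define e where "e = exp (a * h)"
  define \<kappa> where "\<kappa> = (c / a) * (e - 1)"
  define \<beta> where "\<beta> = (b / a) * (e - 1)"
  have "e \<noteq> 1"
    using assms(1,2) by (simp add: e_def)
  then have "\<kappa> \<noteq> 0" and "\<beta> \<noteq> 0"
    using assms(1,6,7) by (simp_all add: \<kappa>_def \<beta>_def)
  have PBH: "v = 0"
    if "v v* cmat (e *\<^sub>R mat 1 + \<kappa> *\<^sub>R W) = s *s v"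
      and "v v* cmat (\<beta> *\<^sub>R diagm \<delta>) = 0" for s v
  proof (rule pair_controllable_left_eigenvector[OF assms(5)])
    have "complex_of_real e *s v + complex_of_real \<kappa> *s (v v* cmat W) = s *s v"
      using that(1) by (simp add: cmat_add cmat_mat vector_matrix_mult_add_rdistrib vector_cmat_scaleR
          vector_matrix_mat)
    then show "v v* cmat W = ((s - e) / \<kappa>) *s v"
      using \<open>\<kappa> \<noteq> 0\<close> by (auto simp: vec_eq_iff field_simps)
    show "v v* cmat (diagm \<delta>) = 0"
      using that(2) \<open>\<beta> \<noteq> 0\<close> by (simp add: vector_cmat_scaleR)
  qed
  show ?thesis
    using dt_controllable_if_span[OF span_controllability_vectors_if_PBH[OF PBH]]
    by (simp add: e_def \<kappa>_def \<beta>_def)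
qed

end
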